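(* Suppose either $R=0$, or $X$ and $Y$ are independent under $P_{XY}$ (i.e. $P_{XY}=P_XP_Y$). Then $$\sup_{Q_Y}\ \inf_{Q_{U\mid Y}:\ I(Q_{Y;U})\le R}\ \sup_{Q_{X\mid YU}}\Big(\rho\, R_D(Q_{X\mid U})-D\big(Q_{XYU}\,\|\,P_{XY}Q_{U\mid Y}\big)\Big) =\sup_{Q_X}\Big(\rho\,R_D(Q_X)-D(Q_X\|P_X)\Big),$$ where $R_D(Q_X)=\min_{Q_{\hat X\mid X}:\ \mathbb{E}[d(X,\hat X)]\le D} I(X;\hat X)$ is the (unconditional) rate–distortion function of $Q_X$.
   Context: $\mathcal{X},\mathcal{Y},\hat{\mathcal{X}}$ are finite sets, $P_{XY}$ is a PMF on $\mathcal{X}\times\mathcal{Y}$ with $X$-marginal $P_X$ and $Y$-marginal $P_Y$, $d\colon\mathcal{X}\times\hat{\mathcal{X}}\to\mathbb{R}_{\ge0}$, $D>0$, $R\ge0$, $\rho>0$. The optimization on the left is over $Q_Y\in\mathcal{P}(\mathcal{Y})$, a finite set $\mathcal{U}$, $Q_{U\mid Y}\in\mathcal{P}(\mathcal{U}\mid\mathcal{Y})$, $Q_{X\mid YU}\in\mathcal{P}(\mathcal{X}\mid\mathcal{Y}\times\mathcal{U})$ with quantities evaluated under $Q_{XYU}=Q_YQ_{U\mid Y}Q_{X\mid YU}$; on the right over $Q_X\in\mathcal{P}(\mathcal{X})$. $R_D(Q_{X\mid U})=\min_{Q_{\hat X\mid XU}:\ \mathbb{E}[d(X,\hat X)]\le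 D} I(X;\hat X\mid U)$ evaluated under $Q_{\hat X\mid XU}Q_{XU}$. $P_{XY}Q_{U\mid Y}$ denotes $(x,y,u)\mapsto P_{XY}(x,y)Q_{U\mid Y}(u\mid y)$. Logarithms are base 2. *)

theory Defs
  imports "HOL-Analysis.Analysis"
begin

definition pmf_on :: "'a set \<Rightarrow> ('a \<Rightarrow> real) \<Rightarrow> bool" where
  "pmf_on S p \<longleftrightarrow> (\<forall>a\<in>S. 0 \<le> p a) \<and> sum p S = 1"

definition channel_on :: "'a set \<Rightarrow> 'b set \<Rightarrow> ('a \<Rightarrow> 'b \<Rightarrow> real) \<Rightarrow> bool" where
  "channel_on A B W \<longleftrightarrow> (\<forall>a\<in>A. pmf_on B (W a))"

definition kl_div :: "'a set \<Rightarrow> ('a \<Rightarrow> real) \<Rightarrow> ('a \<Rightarrow> real) \<Rightarrow> ereal" where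
  "kl_div S q p =
     (if \<exists>a\<in>S. 0 < q a \<and> p a = 0 then \<infinity>
      else ereal (\<Sum>a\<in>S. if 0 < q a then q a * log 2 (q a / p a) else 0))"

definition mutual_info :: "'a set \<Rightarrow> 'b set \<Rightarrow> ('a \<Rightarrow> 'b \<Rightarrow> real) \<Rightarrow> ereal" where
  "mutual_info A B q =
     kl_div (A \<times> B) (\<lambda>(a, b). q a b)
       (\<lambda>(a, b). (\<Sum>b'\<in>B. q a b') * (\<Sum>a'\<in>A. q a' b))"

definition cond_mutual_info ::
  "'a set \<Rightarrow> 'b set \<Rightarrow> 'c set \<Rightarrow> ('a \<Rightarrow> 'b \<Rightarrow> 'c \<Rightarrow> real) \<Rightarrow> ereal" where
  "cond_mutual_info A B C q =
     kl_div (A \<times> B \<times> C) (\<lambda>(a, b, c). q a b c)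
       (\<lambda>(a, b, c). (\<Sum>b'\<in>B. q a b' c) * (\<Sum>a'\<in>A. q a' b c)
                      / (\<Sum>a'\<in>A. \<Sum>b'\<in>B. q a' b' c))"

text \<open>Rate-distortion function R_D(Q_X) = min over test channels Q_{Xhat|X} with
  E[d(X,Xhat)] <= D of I(X;Xhat) (infimum in the extended reals; +infinity if no
  channel is feasible).\<close>
definition rate_dist :: "('x::finite \<Rightarrow> 'xh::finite \<Rightarrow> real) \<Rightarrow> real \<Rightarrow> ('x \<Rightarrow> real) \<Rightarrow> ereal" where
  "rate_dist d D qX =
     (INF W \<in> {W. channel_on UNIV UNIV W \<and>
                  (\<Sum>x\<in>UNIV. \<Sum>xh\<in>UNIV. qX x * W x xh * d x xh) \<le> D}.
        mutual_info UNIV UNIV (\<lambda>x xh. qX x * W x xh))"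

definition cond_rate_dist ::
  "('x::finite \<Rightarrow> 'xh::finite \<Rightarrow> real) \<Rightarrow> real \<Rightarrow> 'u set \<Rightarrow> ('x \<Rightarrow> 'u \<Rightarrow> real) \<Rightarrow> ereal" where
  "cond_rate_dist d D Us qXU =
     (INF W \<in> {W. channel_on (UNIV \<times> Us) UNIV W \<and>
                  (\<Sum>x\<in>UNIV. \<Sum>u\<in>Us. \<Sum>xh\<in>UNIV. qXU x u * W (x, u) xh * d x xh) \<le> D}.
        cond_mutual_info UNIV UNIV Us (\<lambda>x xh u. qXU x u * W (x, u) xh))"

end

theory Submission
  imports Defs
begin

text \<open>Pairing any Q_Y with a constant auxiliary U meets every rate constraint; then the
  conditional rate-distortion function is the unconditional one of the X-marginal, and
  marginalizing can only decrease relative entropy, which gives "<=".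
  Conversely, for a target Q_X take the joint Q_X P_{Y|X} if R = 0, and Q_X P_Y otherwise
  (which is Q_X P_{Y|X} when P_XY = P_X P_Y). Then every admissible U is independent of X
  (for R = 0 because U is independent of Y and X depends on U only through Y), so
  convexity of the rate-distortion function gives R_D(Q_{X|U}) >= R_D(Q_X), while the
  divergence term equals D(Q_X || P_X), or the bound is trivial when that is infinite.\<close>

definition kl_term :: "real \<Rightarrow> real \<Rightarrow> real" where
  "kl_term a b = (if 0 < a then a * log 2 (a / b) else 0)"

lemma kl_div_eq_sum_kl_term:
  "kl_div S q p =
     (if \<exists>a\<in>S. 0 < q a \<and> p a = 0 then \<infinity> else ereal (\<Sum>a\<in>S. kl_term (q a) (p a)))"
  unfolding kl_div_def kl_term_def by simp

lemma kl_div_cong: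
  assumes "\<forall>a\<in>S. q a = q' a \<and> p a = p' a"
  shows "kl_div S q p = kl_div S q' p'"
  using assms unfolding kl_div_def by (auto intro!: sum.cong)

lemma kl_div_reindex:
  assumes "bij_betw h S' S"
  shows "kl_div S q p = kl_div S' (q \<circ> h) (p \<circ> h)"
proof -
  have "(\<exists>a\<in>S. 0 < q a \<and> p a = 0) = (\<exists>a\<in>S'. 0 < q (h a) \<and> p (h a) = 0)"
    using assms by (metis bij_betw_apply bij_betw_imp_surj_on imageE)
  moreover have "(\<Sum>a\<in>S. kl_term (q a) (p a)) = (\<Sum>a\<in>S'. kl_term (q (h a)) (p (h a)))"
    using sum.reindex_bij_betw[OF assms, of "\<lambda>a. kl_term (q a) (p a)"] by simp
  ultimately show ?thesis by (simp add: kl_div_eq_sum_kl_term)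
qed

lemma kl_div_self: "kl_div S q q = 0"
  unfolding kl_div_def by (auto intro!: sum.neutral)

lemma one_minus_inverse_le_ln: "0 < (t::real) \<Longrightarrow> 1 - 1/t \<le> ln t"
  using ln_le_minus_one[of "1/t"] by (simp add: ln_div)

lemma kl_term_ge:
  assumes "0 < q" "0 < p"
  shows "(q - p) / ln 2 \<le> kl_term q p"
proof -
  have "1 - p/q \<le> ln (q/p)" using one_minus_inverse_le_ln[of "q/p"] assms by simp
  hence "q - p \<le> q * ln (q/p)" using assms by (simp add: field_simps)
  thus ?thesis using assms by (simp add: kl_term_def log_def divide_right_mono)
qed

lemma kl_term_eq_imp_eq:
  assumes "0 < q" "0 < p" "kl_term q p = (q - p) / ln 2"
  shows "q = p"
proof -
  have "q * ln (q/p) = q - p" using assms by (simp add: kl_term_def log_def)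
  hence "ln (p/q) = p/q - 1" using assms by (simp add: ln_div field_simps)
  hence "p/q = 1" using ln_eq_minus_one[of "p/q"] assms by simp
  thus ?thesis using assms by simp
qed

lemma log_sum_term_ge:
  assumes "0 < q" "0 < p" "0 < Q" "0 < P"
  shows "(q - p*Q/P)/ln 2 \<le> q*log 2 (q/p) - q*log 2 (Q/P)"
proof -
  have "1 - (p*Q)/(q*P) \<le> ln ((q*P)/(p*Q))"
    using one_minus_inverse_le_ln[of "(q*P)/(p*Q)"] assms by simp
  also have "ln ((q*P)/(p*Q)) = ln (q/p) - ln (Q/P)" using assms by (simp add: ln_div ln_mult)
  finally have "q - p*Q/P \<le> q * (ln (q/p) - ln (Q/P))" using assms
    by (simp add: field_simps)
  hence "(q - p*Q/P)/ln 2 \<le> q * (ln (q/p) - ln (Q/P)) / ln 2" by (simp add: divide_right_mono)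
  thus ?thesis by (simp add: log_def field_simps)
qed

lemma log_sum_inequality:
  assumes fin: "finite T" and nq: "\<forall>t\<in>T. 0 \<le> q t" and np: "\<forall>t\<in>T. 0 \<le> p t"
    and ac: "\<forall>t\<in>T. 0 < q t \<longrightarrow> 0 < p t"
  shows "kl_term (\<Sum>t\<in>T. q t) (\<Sum>t\<in>T. p t) \<le> (\<Sum>t\<in>T. kl_term (q t) (p t))"
proof (cases "(\<Sum>t\<in>T. q t) = 0")
  case True
  then show ?thesis by (simp add: kl_term_def sum_nonneg_eq_0_iff[OF fin] nq)
next
  case False
  define Q where "Q = (\<Sum>t\<in>T. q t)"
  define P where "P = (\<Sum>t\<in>T. p t)"
  have Q_pos: "0 < Q" using False nq unfolding Q_def by (simp add: order_less_le sum_nonneg)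
  obtain t0 where t0: "t0 \<in> T" "0 < q t0"
    using Q_pos unfolding Q_def by (metis (no_types, lifting) leD sum_nonpos not_le)
  have "p t0 \<le> P" unfolding P_def using member_le_sum[OF t0(1), of p] np fin by auto
  hence P_pos: "0 < P" using ac t0 by force
  have "(q t - p t*Q/P)/ln 2 \<le> kl_term (q t) (p t) - q t * log 2 (Q/P)" if t: "t \<in> T" for t
  proof (cases "0 < q t")
    case True
    then show ?thesis using log_sum_term_ge[OF True _ Q_pos P_pos, of "p t"] ac t
      by (simp add: kl_term_def)
  next
    case False
    hence "q t = 0" using nq t by force
    moreover have "0 \<le> p t * Q / P / ln 2" using np t Q_pos P_pos by simp
    ultimately show ?thesis by (simp add: kl_term_def)
  qed
  hence "(\<Sum>t\<in>T. (q t - p t*Q/P)/ln 2) \<le> (\<Sum>t\<in>T. kl_term (q t) (p t) - q t * log 2 (Q/P))"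
    by (rule sum_mono)
  moreover have "(\<Sum>t\<in>T. (q t - p t*Q/P)/ln 2) = (Q - P*Q/P)/ln 2"
    unfolding Q_def P_def
    by (simp add: sum_divide_distrib[symmetric] sum_subtractf sum_distrib_right[symmetric])
  moreover have "(\<Sum>t\<in>T. kl_term (q t) (p t) - q t * log 2 (Q/P))
      = (\<Sum>t\<in>T. kl_term (q t) (p t)) - Q * log 2 (Q/P)"
    unfolding Q_def by (simp add: sum_subtractf sum_distrib_right)
  ultimately have "Q * log 2 (Q/P) \<le> (\<Sum>t\<in>T. kl_term (q t) (p t))" using P_pos by simp
  thus ?thesis using Q_pos unfolding Q_def[symmetric] P_def[symmetric] by (simp add: kl_term_def)
qed

lemma kl_div_marginal_le:
  assumes "finite S" "finite T"
    and f_nonneg: "\<forall>z\<in>S\<times>T. 0 \<le> f z" and g_nonneg: "\<forall>z\<in>S\<times>T. 0 \<le> g z"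
  shows "kl_div S (\<lambda>s. \<Sum>t\<in>T. f (s,t)) (\<lambda>s. \<Sum>t\<in>T. g (s,t)) \<le> kl_div (S\<times>T) f g"
proof (cases "\<exists>z\<in>S\<times>T. 0 < f z \<and> g z = 0")
  case True
  then show ?thesis by (simp add: kl_div_def)
next
  case False
  have ac: "\<forall>z\<in>S\<times>T. 0 < f z \<longrightarrow> 0 < g z" using False g_nonneg by force
  have marginal_ac: "\<not> (\<exists>s\<in>S. 0 < (\<Sum>t\<in>T. f (s,t)) \<and> (\<Sum>t\<in>T. g (s,t)) = 0)"
  proof
    assume "\<exists>s\<in>S. 0 < (\<Sum>t\<in>T. f (s,t)) \<and> (\<Sum>t\<in>T. g (s,t)) = 0"
    then obtain s where s: "s \<in> S" "0 < (\<Sum>t\<in>T. f (s,t))" "(\<Sum>t\<in>T. g (s,t)) = 0" by blast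
    obtain t where t: "t \<in> T" "0 < f (s,t)"
      using s(2) by (metis (no_types, lifting) leD sum_nonpos not_le)
    have "g (s,t) \<le> (\<Sum>t\<in>T. g (s,t))"
      using member_le_sum[OF t(1), of "\<lambda>t. g (s,t)"] g_nonneg s(1) assms(2) by auto
    moreover have "0 < g (s,t)" using ac s(1) t by auto
    ultimately show False using s(3) by simp
  qed
  have "(\<Sum>s\<in>S. kl_term (\<Sum>t\<in>T. f (s,t)) (\<Sum>t\<in>T. g (s,t)))
      \<le> (\<Sum>s\<in>S. \<Sum>t\<in>T. kl_term (f (s,t)) (g (s,t)))"
    by (rule sum_mono, rule log_sum_inequality) (use assms ac in auto)
  also have "\<dots> = (\<Sum>z\<in>S\<times>T. kl_term (f z) (g z))"
    by (simp add: sum.cartesian_product)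
  finally show ?thesis using False marginal_ac by (simp add: kl_div_eq_sum_kl_term)
qed

lemma kl_div_nonpos_imp_eq:
  assumes fin: "finite S" and q_nonneg: "\<forall>a\<in>S. 0 \<le> q a" and p_nonneg: "\<forall>a\<in>S. 0 \<le> p a"
    and same_mass: "sum q S = sum p S" and kl_nonpos: "kl_div S q p \<le> 0"
  shows "\<forall>a\<in>S. q a = p a"
proof -
  have no_infty: "\<not> (\<exists>a\<in>S. 0 < q a \<and> p a = 0)"
  proof
    assume "\<exists>a\<in>S. 0 < q a \<and> p a = 0"
    hence "kl_div S q p = \<infinity>" by (simp add: kl_div_def)
    thus False using kl_nonpos by simp
  qed
  hence ac: "\<forall>a\<in>S. 0 < q a \<longrightarrow> 0 < p a" using p_nonneg by force
  have sum_nonpos: "(\<Sum>a\<in>S. kl_term (q a) (p a)) \<le> 0"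
    using kl_nonpos no_infty by (simp add: kl_div_eq_sum_kl_term)
  define h where "h a = kl_term (q a) (p a) - (q a - p a)/ln 2" for a
  have h_nonneg: "0 \<le> h a" if a: "a \<in> S" for a
  proof (cases "0 < q a")
    case True thus ?thesis using kl_term_ge[OF True] ac a by (simp add: h_def)
  next
    case False hence "q a = 0" using q_nonneg a by force
    thus ?thesis using p_nonneg a by (simp add: h_def kl_term_def)
  qed
  have "sum h S = (\<Sum>a\<in>S. kl_term (q a) (p a)) - (sum q S - sum p S)/ln 2"
    unfolding h_def by (simp add: sum_subtractf sum_divide_distrib[symmetric])
  hence "sum h S \<le> 0" using sum_nonpos same_mass by simp
  hence "sum h S = 0" using h_nonneg by (meson antisym sum_nonneg)
  hence h0: "\<forall>a\<in>S. h a = 0" using sum_nonneg_eq_0_iff[OF fin] h_nonneg by blast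
  show ?thesis
  proof
    fix a assume a: "a \<in> S"
    show "q a = p a"
    proof (cases "0 < q a")
      case True thus ?thesis using kl_term_eq_imp_eq[OF True] ac a h0 by (simp add: h_def)
    next
      case False hence "q a = 0" using q_nonneg a by force
      moreover have "h a = 0" using h0 a by blast
      ultimately show ?thesis by (simp add: h_def kl_term_def)
    qed
  qed
qed

lemma mutual_info_nonpos_imp_indep:
  assumes fin: "finite A" "finite B" and q_nonneg: "\<forall>a\<in>A. \<forall>b\<in>B. 0 \<le> q a b"
    and q_sum: "(\<Sum>a\<in>A. \<Sum>b\<in>B. q a b) = 1" and mi: "mutual_info A B q \<le> 0"
  shows "\<forall>a\<in>A. \<forall>b\<in>B. q a b = (\<Sum>b'\<in>B. q a b') * (\<Sum>a'\<in>A. q a' b)"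
proof -
  define qA where "qA a = (\<Sum>b'\<in>B. q a b')" for a
  define qB where "qB b = (\<Sum>a'\<in>A. q a' b)" for b
  have "sum qB B = 1"
    using q_sum unfolding qB_def by (subst sum.swap) simp
  then have mass: "(\<Sum>z\<in>A \<times> B. (\<lambda>(a, b). q a b) z) = (\<Sum>z\<in>A \<times> B. (\<lambda>(a, b). qA a * qB b) z)"
    using q_sum unfolding sum.cartesian_product' qA_def
    by (simp only: split_conv sum_product[symmetric] mult_1_right)
  have joint_nonneg: "\<forall>z\<in>A \<times> B. 0 \<le> (\<lambda>(a, b). q a b) z"
    using q_nonneg by auto
  have product_nonneg: "\<forall>z\<in>A \<times> B. 0 \<le> (\<lambda>(a, b). qA a * qB b) z"
    using q_nonneg unfolding qA_def qB_def by (auto intro!: mult_nonneg_nonneg sum_nonneg)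
  have "kl_div (A \<times> B) (\<lambda>(a, b). q a b) (\<lambda>(a, b). qA a * qB b) \<le> 0"
    using mi unfolding mutual_info_def qA_def qB_def .
  note eq = kl_div_nonpos_imp_eq[OF finite_cartesian_product[OF fin] joint_nonneg product_nonneg mass this]
  show ?thesis
  proof (intro ballI)
    fix a b assume "a \<in> A" "b \<in> B"
    then show "q a b = (\<Sum>b'\<in>B. q a b') * (\<Sum>a'\<in>A. q a' b)"
      using eq[rule_format, of "(a, b)"] by (simp add: qA_def qB_def)
  qed
qed

lemma cond_rate_dist_cong:
  assumes "\<forall>x. \<forall>u\<in>Us. f x u = g x u"
  shows "cond_rate_dist d D Us f = cond_rate_dist d D Us g"
proof -
  have distortion: "(\<Sum>x\<in>UNIV. \<Sum>u\<in>Us. \<Sum>xh\<in>UNIV. f x u * W (x, u) xh * d x xh)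
      = (\<Sum>x\<in>UNIV. \<Sum>u\<in>Us. \<Sum>xh\<in>UNIV. g x u * W (x, u) xh * d x xh)" for W
    using assms by (intro sum.cong refl) auto
  have information: "cond_mutual_info UNIV UNIV Us (\<lambda>x xh u. f x u * W (x, u) xh)
      = cond_mutual_info UNIV UNIV Us (\<lambda>x xh u. g x u * W (x, u) xh)" for W
    unfolding cond_mutual_info_def using assms by (intro kl_div_cong) auto
  show ?thesis unfolding cond_rate_dist_def distortion information ..
qed

lemma cond_rate_dist_lessThan_one_le:
  fixes q :: "'x::finite \<Rightarrow> real" and d :: "'x \<Rightarrow> 'xh::finite \<Rightarrow> real"
  assumes "(\<Sum>x\<in>UNIV. q x) = 1"
  shows "cond_rate_dist d D {..<1::nat} (\<lambda>x u. q x) \<le> rate_dist d D q"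
  unfolding cond_rate_dist_def rate_dist_def
proof (rule INF_mono)
  fix W assume "W \<in> {W. channel_on UNIV UNIV W \<and>
      (\<Sum>x\<in>UNIV. \<Sum>xh\<in>UNIV. q x * W x xh * d x xh) \<le> D}"
  hence W: "\<forall>x. pmf_on UNIV (W x)" and distortion: "(\<Sum>x\<in>UNIV. \<Sum>xh\<in>UNIV. q x * W x xh * d x xh) \<le> D"
    by (auto simp: channel_on_def)
  let ?W = "\<lambda>(x::'x, u::nat). W x"
  have "(\<Sum>a'\<in>UNIV. \<Sum>b'\<in>UNIV. q a' * W a' b') = 1"
    using assms W by (simp add: sum_distrib_left[symmetric] pmf_on_def)
  moreover have "bij_betw (\<lambda>(x::'x, xh::'xh). (x, xh, 0::nat)) (UNIV \<times> UNIV) (UNIV \<times> UNIV \<times> {..<1::nat})"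
    by (auto simp: bij_betw_def inj_on_def image_def)
  ultimately have "cond_mutual_info UNIV UNIV {..<1::nat} (\<lambda>x xh u. q x * ?W (x, u) xh)
      = mutual_info UNIV UNIV (\<lambda>x xh. q x * W x xh)"
    unfolding cond_mutual_info_def mutual_info_def
    by (subst kl_div_reindex) (auto intro!: kl_div_cong)
  then show "\<exists>W'\<in>{W. channel_on (UNIV \<times> {..<1::nat}) UNIV W \<and>
      (\<Sum>x\<in>UNIV. \<Sum>u\<in>{..<1::nat}. \<Sum>xh\<in>UNIV. q x * W (x, u) xh * d x xh) \<le> D}.
      cond_mutual_info UNIV UNIV {..<1::nat} (\<lambda>x xh u. q x * W' (x, u) xh)
        \<le> mutual_info UNIV UNIV (\<lambda>x xh. q x * W x xh)"
    using W distortion by (intro bexI[of _ ?W]) (auto simp: channel_on_def)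
qed

lemma cond_mutual_info_independent_input:
  fixes q :: "'x::finite \<Rightarrow> real" and W :: "'x \<times> 'u \<Rightarrow> 'xh::finite \<Rightarrow> real"
  assumes q_sum: "(\<Sum>x\<in>UNIV. q x) = 1" and W: "channel_on (UNIV \<times> Us) UNIV W"
  shows "cond_mutual_info UNIV UNIV Us (\<lambda>x xh u. q x * w u * W (x, u) xh)
    = kl_div ((UNIV \<times> UNIV) \<times> Us) (\<lambda>((x, xh), u). q x * w u * W (x, u) xh)
        (\<lambda>((x, xh), u). q x * w u * (\<Sum>a\<in>UNIV. q a * W (a, u) xh))"
proof -
  define r where "r u xh = (\<Sum>a\<in>UNIV. q a * W (a, u) xh)" for u xh
  have W_sum: "\<And>x u. u \<in> Us \<Longrightarrow> (\<Sum>xh\<in>UNIV. W (x, u) xh) = 1"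
    using W by (auto simp: channel_on_def pmf_on_def)
  have "(\<Sum>x'\<in>UNIV. \<Sum>xh'\<in>UNIV. q x' * w u * W (x', u) xh') = w u" if "u \<in> Us" for u
    using that
    by (simp add: sum_distrib_left[symmetric] W_sum q_sum sum_distrib_right[symmetric] mult.commute)
  moreover have "(\<Sum>xh'\<in>UNIV. q x * w u * W (x, u) xh') = q x * w u" if "u \<in> Us" for x u
    using that by (simp add: sum_distrib_left[symmetric] W_sum)
  moreover have "(\<Sum>x'\<in>UNIV. q x' * w u * W (x', u) xh) = w u * r u xh" for xh u
    unfolding r_def by (simp add: sum_distrib_left mult_ac)
  moreover have "q x * w u * (w u * r u xh) / w u = q x * w u * r u xh" for x u xh
    by (cases "w u = 0") auto
  ultimately have "cond_mutual_info UNIV UNIV Us (\<lambda>x xh u. q x * w u * W (x, u) xh)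
      = kl_div (UNIV \<times> UNIV \<times> Us) (\<lambda>(x, xh, u). q x * w u * W (x, u) xh)
          (\<lambda>(x, xh, u). q x * w u * r u xh)"
    unfolding cond_mutual_info_def by (intro kl_div_cong) auto
  also have "\<dots> = kl_div ((UNIV \<times> UNIV) \<times> Us) (\<lambda>((x, xh), u). q x * w u * W (x, u) xh)
      (\<lambda>((x, xh), u). q x * w u * r u xh)"
  proof -
    have bij: "bij_betw (\<lambda>((x, xh), u). (x, xh, u)) ((UNIV \<times> UNIV) \<times> Us) (UNIV \<times> UNIV \<times> Us)"
      by (auto simp: bij_betw_def inj_on_def image_def)
    show ?thesis unfolding kl_div_reindex[OF bij] by (intro kl_div_cong) auto
  qed
  finally show ?thesis unfolding r_def .
qed

lemma mutual_info_averaged_channel_le: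
  fixes q :: "'x::finite \<Rightarrow> real" and W :: "'x \<times> 'u \<Rightarrow> 'xh::finite \<Rightarrow> real"
  assumes q: "pmf_on UNIV q" and w: "pmf_on Us w" and "finite Us"
    and W: "channel_on (UNIV \<times> Us) UNIV W"
  shows "mutual_info UNIV UNIV (\<lambda>x xh. q x * (\<Sum>u\<in>Us. w u * W (x, u) xh))
    \<le> cond_mutual_info UNIV UNIV Us (\<lambda>x xh u. q x * w u * W (x, u) xh)"
proof -
  have W_nonneg: "\<And>x u xh. u \<in> Us \<Longrightarrow> 0 \<le> W (x, u) xh"
    and W_sum: "\<And>x u. u \<in> Us \<Longrightarrow> (\<Sum>xh\<in>UNIV. W (x, u) xh) = 1"
    using W by (auto simp: channel_on_def pmf_on_def)
  have w_nonneg: "\<And>u. u \<in> Us \<Longrightarrow> 0 \<le> w u" and w_sum: "sum w Us = 1"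
    using w by (auto simp: pmf_on_def)
  have q_nonneg: "\<And>x. 0 \<le> q x" and q_sum: "(\<Sum>x\<in>UNIV. q x) = 1"
    using q by (auto simp: pmf_on_def)
  define r where "r u xh = (\<Sum>a\<in>UNIV. q a * W (a, u) xh)" for u xh
  define f where "f = (\<lambda>((x, xh), u). q x * w u * W (x, u) xh)"
  define g where "g = (\<lambda>((x, xh), u). q x * w u * r u xh)"
  have "(\<Sum>xh'\<in>UNIV. \<Sum>u\<in>Us. w u * W (x, u) xh') = 1" for x
    by (subst sum.swap) (simp add: sum_distrib_left[symmetric] W_sum w_sum cong: sum.cong)
  moreover have "(\<Sum>x'\<in>UNIV. q x' * (\<Sum>u\<in>Us. w u * W (x', u) xh)) = (\<Sum>u\<in>Us. w u * r u xh)" for xh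
    unfolding r_def by (simp add: sum_distrib_left sum.swap[of _ UNIV] mult_ac)
  ultimately have "mutual_info UNIV UNIV (\<lambda>x xh. q x * (\<Sum>u\<in>Us. w u * W (x, u) xh))
      = kl_div (UNIV \<times> UNIV) (\<lambda>s. \<Sum>u\<in>Us. f (s, u)) (\<lambda>s. \<Sum>u\<in>Us. g (s, u))"
    unfolding mutual_info_def f_def g_def
    by (intro kl_div_cong) (auto simp: sum_distrib_left[symmetric] sum_distrib_right[symmetric] mult_ac)
  also have "\<dots> \<le> kl_div ((UNIV \<times> UNIV) \<times> Us) f g"
    using \<open>finite Us\<close>
    by (intro kl_div_marginal_le)
       (auto simp: f_def g_def r_def q_nonneg w_nonneg W_nonneg intro!: mult_nonneg_nonneg sum_nonneg)
  also have "\<dots> = cond_mutual_info UNIV UNIV Us (\<lambda>x xh u. q x * w u * W (x, u) xh)"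
    unfolding f_def g_def r_def by (rule cond_mutual_info_independent_input[OF q_sum W, symmetric])
  finally show ?thesis .
qed

lemma rate_dist_le_cond_rate_dist_product:
  fixes q :: "'x::finite \<Rightarrow> real" and d :: "'x \<Rightarrow> 'xh::finite \<Rightarrow> real" and w :: "'u \<Rightarrow> real"
  assumes q: "pmf_on UNIV q" and w: "pmf_on Us w" and "finite Us"
  shows "rate_dist d D q \<le> cond_rate_dist d D Us (\<lambda>x u. q x * w u)"
  unfolding cond_rate_dist_def
proof (rule INF_greatest)
  fix W assume "W \<in> {W. channel_on (UNIV \<times> Us) UNIV W \<and>
      (\<Sum>x\<in>UNIV. \<Sum>u\<in>Us. \<Sum>xh\<in>UNIV. q x * w u * W (x, u) xh * d x xh) \<le> D}"
  hence W: "channel_on (UNIV \<times> Us) UNIV W"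
    and distortion: "(\<Sum>x\<in>UNIV. \<Sum>u\<in>Us. \<Sum>xh\<in>UNIV. q x * w u * W (x, u) xh * d x xh) \<le> D"
    by auto
  define W_avg where "W_avg x xh = (\<Sum>u\<in>Us. w u * W (x, u) xh)" for x xh
  have "(\<Sum>xh\<in>UNIV. W_avg x xh) = 1" for x
  proof -
    have "(\<Sum>xh\<in>UNIV. W_avg x xh) = (\<Sum>u\<in>Us. w u * (\<Sum>xh\<in>UNIV. W (x, u) xh))"
      unfolding W_avg_def by (subst sum.swap) (simp add: sum_distrib_left)
    also have "\<dots> = sum w Us" using W by (intro sum.cong) (auto simp: channel_on_def pmf_on_def)
    finally show ?thesis using w by (simp add: pmf_on_def)
  qed
  then have "channel_on UNIV UNIV W_avg"
    using W w unfolding channel_on_def pmf_on_def W_avg_def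
    by (auto intro!: sum_nonneg mult_nonneg_nonneg)
  moreover have "(\<Sum>x\<in>UNIV. \<Sum>xh\<in>UNIV. q x * W_avg x xh * d x xh) \<le> D"
    using distortion unfolding W_avg_def
    by (simp add: sum.swap[of _ UNIV Us] sum_distrib_left sum_distrib_right mult_ac)
  ultimately have "rate_dist d D q \<le> mutual_info UNIV UNIV (\<lambda>x xh. q x * W_avg x xh)"
    unfolding rate_dist_def by (intro INF_lower) simp
  also have "\<dots> \<le> cond_mutual_info UNIV UNIV Us (\<lambda>x xh u. q x * w u * W (x, u) xh)"
    unfolding W_avg_def by (rule mutual_info_averaged_channel_le[OF q w \<open>finite Us\<close> W])
  finally show "rate_dist d D q \<le> cond_mutual_info UNIV UNIV Us (\<lambda>x xh u. q x * w u * W (x, u) xh)" .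
qed

definition scheme_objective ::
  "('x::finite \<Rightarrow> 'y::finite \<Rightarrow> real) \<Rightarrow> ('x \<Rightarrow> 'xh::finite \<Rightarrow> real) \<Rightarrow> real \<Rightarrow> real \<Rightarrow>
   ('y \<Rightarrow> real) \<Rightarrow> nat \<Rightarrow> ('y \<Rightarrow> nat \<Rightarrow> real) \<Rightarrow> ('y \<times> nat \<Rightarrow> 'x \<Rightarrow> real) \<Rightarrow> ereal" where
  "scheme_objective P d D \<rho> QY k QU QX =
     ereal \<rho> * cond_rate_dist d D {..<k} (\<lambda>x u. \<Sum>y\<in>UNIV. QY y * QU y u * QX (y, u) x)
     - kl_div (UNIV \<times> UNIV \<times> {..<k})
         (\<lambda>(x, y, u). QY y * QU y u * QX (y, u) x) (\<lambda>(x, y, u). P x y * QU y u)"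

text \<open>The auxiliary alphabet is {..<k}; its size k is part of the channel.\<close>

definition rate_limited_channels :: "('y::finite \<Rightarrow> real) \<Rightarrow> real \<Rightarrow> (nat \<times> ('y \<Rightarrow> nat \<Rightarrow> real)) set" where
  "rate_limited_channels QY R =
     {(k, QU). channel_on UNIV {..<k} QU \<and> mutual_info UNIV {..<k} (\<lambda>y u. QY y * QU y u) \<le> ereal R}"

lemma constant_channel_rate_limited:
  assumes "pmf_on UNIV QY" "0 \<le> R"
  shows "(1, \<lambda>_ _. 1) \<in> rate_limited_channels QY R"
proof -
  have "mutual_info UNIV {..<1::nat} (\<lambda>y u. QY y * 1) = kl_div (UNIV \<times> {..<1::nat}) (\<lambda>(y, u). QY y) (\<lambda>(y, u). QY y)"
    using assms unfolding mutual_info_def pmf_on_def by (intro kl_div_cong) (auto simp: lessThan_Suc)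
  then show ?thesis
    using assms by (simp add: rate_limited_channels_def channel_on_def pmf_on_def kl_div_self)
qed

lemma scheme_objective_constant_channel_le:
  fixes P :: "'x::finite \<Rightarrow> 'y::finite \<Rightarrow> real" and d :: "'x \<Rightarrow> 'xh::finite \<Rightarrow> real"
  assumes P_nonneg: "\<forall>x y. 0 \<le> P x y" and rho_pos: "0 < \<rho>"
    and QY: "pmf_on UNIV QY" and QX: "channel_on (UNIV \<times> {..<1}) UNIV QX"
  shows "scheme_objective P d D \<rho> QY 1 (\<lambda>_ _. 1) QX
    \<le> ereal \<rho> * rate_dist d D (\<lambda>x. \<Sum>y\<in>UNIV. QY y * QX (y, 0) x)
       - kl_div UNIV (\<lambda>x. \<Sum>y\<in>UNIV. QY y * QX (y, 0) x) (\<lambda>x. \<Sum>y\<in>UNIV. P x y)"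
proof -
  define qX where "qX x = (\<Sum>y\<in>UNIV. QY y * QX (y, 0) x)" for x
  have "(\<Sum>x\<in>UNIV. qX x) = (\<Sum>y\<in>UNIV. QY y * (\<Sum>x\<in>UNIV. QX (y, 0) x))"
    unfolding qX_def by (subst sum.swap) (simp add: sum_distrib_left)
  then have "(\<Sum>x\<in>UNIV. qX x) = 1"
    using QY QX by (simp add: pmf_on_def channel_on_def)
  then have "cond_rate_dist d D {..<1} (\<lambda>x u. \<Sum>y\<in>UNIV. QY y * 1 * QX (y, u) x) \<le> rate_dist d D qX"
    using cond_rate_dist_lessThan_one_le[of qX d D]
    by (subst cond_rate_dist_cong[where g = "\<lambda>x u. qX x"]) (auto simp: qX_def)
  moreover have "kl_div UNIV qX (\<lambda>x. \<Sum>y\<in>UNIV. P x y)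
    \<le> kl_div (UNIV \<times> UNIV \<times> {..<1}) (\<lambda>(x, y, u). QY y * 1 * QX (y, u) x) (\<lambda>(x, y, u). P x y * 1)"
    using kl_div_marginal_le[of UNIV "UNIV \<times> {..<1::nat}"
        "\<lambda>(x, y, u). QY y * 1 * QX (y, u) x" "\<lambda>(x, y, u). P x y * 1"]
      QY QX P_nonneg
    by (simp add: qX_def[abs_def] sum.cartesian_product' pmf_on_def channel_on_def)
  ultimately show ?thesis
    unfolding scheme_objective_def qX_def[symmetric]
    using rho_pos by (intro ereal_minus_mono ereal_mult_left_mono) auto
qed

lemma rate_limited_value_le_single_letter:
  fixes P :: "'x::finite \<Rightarrow> 'y::finite \<Rightarrow> real" and d :: "'x \<Rightarrow> 'xh::finite \<Rightarrow> real"
  assumes P_nonneg: "\<forall>x y. 0 \<le> P x y" and rho_pos: "0 < \<rho>" and R_nonneg: "0 \<le> R"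
    and QY: "pmf_on UNIV QY"
  shows "(INF (k, QU) \<in> rate_limited_channels QY R.
            SUP QX \<in> {QX. channel_on (UNIV \<times> {..<k}) UNIV QX}. scheme_objective P d D \<rho> QY k QU QX)
    \<le> (SUP q \<in> {q. pmf_on UNIV q}. ereal \<rho> * rate_dist d D q - kl_div UNIV q (\<lambda>x. \<Sum>y\<in>UNIV. P x y))"
proof (rule INF_lower2[OF constant_channel_rate_limited[OF QY R_nonneg]],
    unfold prod.case, rule SUP_least)
  fix QX :: "'y \<times> nat \<Rightarrow> 'x \<Rightarrow> real"
  assume QX: "QX \<in> {QX. channel_on (UNIV \<times> {..<1}) UNIV QX}"
  have "(\<Sum>x\<in>UNIV. \<Sum>y\<in>UNIV. QY y * QX (y, 0) x) = (\<Sum>y\<in>UNIV. QY y * (\<Sum>x\<in>UNIV. QX (y, 0) x))"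
    by (subst sum.swap) (simp add: sum_distrib_left)
  then have "pmf_on UNIV (\<lambda>x. \<Sum>y\<in>UNIV. QY y * QX (y, 0) x)"
    using QY QX by (auto simp: pmf_on_def channel_on_def intro!: sum_nonneg)
  with scheme_objective_constant_channel_le[OF P_nonneg rho_pos QY] QX
  show "scheme_objective P d D \<rho> QY 1 (\<lambda>_ _. 1) QX
    \<le> (SUP q \<in> {q. pmf_on UNIV q}. ereal \<rho> * rate_dist d D q - kl_div UNIV q (\<lambda>x. \<Sum>y\<in>UNIV. P x y))"
    by (blast intro: SUP_upper2)
qed

lemma kl_div_common_conditional:
  assumes "finite S" "finite T" and c_nonneg: "\<forall>s\<in>S. 0 \<le> c s"
    and f_nonneg: "\<forall>s\<in>S. \<forall>t\<in>T. 0 \<le> f s t"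
  shows "kl_div (S \<times> T) (\<lambda>(s, t). c s * f s t) (\<lambda>(s, t). f s t)
    = kl_div S (\<lambda>s. c s * (\<Sum>t\<in>T. f s t)) (\<lambda>s. \<Sum>t\<in>T. f s t)"
proof -
  have kl_term_scaled: "kl_term (a * p) p = a * log 2 a * p" if "0 \<le> a" "0 \<le> p" for a p
    using that by (auto simp: kl_term_def zero_less_mult_iff)
  have F_nonneg: "0 \<le> (\<Sum>t\<in>T. f s t)" if "s \<in> S" for s
    using f_nonneg that by (simp add: sum_nonneg)
  have "(\<Sum>z\<in>S \<times> T. kl_term (c (fst z) * f (fst z) (snd z)) (f (fst z) (snd z)))
      = (\<Sum>s\<in>S. \<Sum>t\<in>T. c s * log 2 (c s) * f s t)"
    by (simp add: sum.cartesian_product' kl_term_scaled c_nonneg f_nonneg cong: sum.cong)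
  also have "\<dots> = (\<Sum>s\<in>S. c s * log 2 (c s) * (\<Sum>t\<in>T. f s t))"
    by (simp add: sum_distrib_left)
  also have "\<dots> = (\<Sum>s\<in>S. kl_term (c s * (\<Sum>t\<in>T. f s t)) (\<Sum>t\<in>T. f s t))"
    by (intro sum.cong refl) (simp add: kl_term_scaled c_nonneg F_nonneg)
  finally show ?thesis
    by (auto simp: kl_div_eq_sum_kl_term case_prod_beta)
qed

lemma kl_div_backward_channel_eq:
  fixes P :: "'x::finite \<Rightarrow> 'y::finite \<Rightarrow> real" and q :: "'x \<Rightarrow> real"
  assumes P_nonneg: "\<forall>x y. 0 \<le> P x y" and q_nonneg: "\<forall>x. 0 \<le> q x"
    and ac: "\<forall>x. 0 < q x \<longrightarrow> 0 < (\<Sum>y\<in>UNIV. P x y)"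
    and backward: "\<forall>x y. QY y * V y x = q x / (\<Sum>y\<in>UNIV. P x y) * P x y"
    and QU: "channel_on UNIV {..<k} QU"
  shows "kl_div (UNIV \<times> UNIV \<times> {..<k::nat})
      (\<lambda>(x, y, u). QY y * QU y u * V y x) (\<lambda>(x, y, u). P x y * QU y u)
    = kl_div UNIV q (\<lambda>x. \<Sum>y\<in>UNIV. P x y)"
proof -
  define PX where "PX x = (\<Sum>y\<in>UNIV. P x y)" for x
  define c where "c x = q x / PX x" for x
  have QU_nonneg: "\<And>y u. u < k \<Longrightarrow> 0 \<le> QU y u" and QU_sum: "\<And>y. (\<Sum>u\<in>{..<k}. QU y u) = 1"
    using QU by (auto simp: channel_on_def pmf_on_def)
  have "QY y * QU y u * V y x = c x * (P x y * QU y u)" for x y u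
  proof -
    have "QY y * QU y u * V y x = QU y u * (QY y * V y x)" by (simp add: mult_ac)
    also have "\<dots> = QU y u * (c x * P x y)" using backward unfolding c_def PX_def by simp
    finally show ?thesis by (simp add: mult_ac)
  qed
  then have "kl_div (UNIV \<times> UNIV \<times> {..<k})
      (\<lambda>(x, y, u). QY y * QU y u * V y x) (\<lambda>(x, y, u). P x y * QU y u)
    = kl_div (UNIV \<times> UNIV \<times> {..<k})
      (\<lambda>(x, yu). c x * (P x (fst yu) * QU (fst yu) (snd yu))) (\<lambda>(x, yu). P x (fst yu) * QU (fst yu) (snd yu))"
    by (intro kl_div_cong) auto
  also have "\<dots> = kl_div UNIV (\<lambda>x. c x * PX x) PX"
  proof -
    have "(\<Sum>yu\<in>UNIV \<times> {..<k}. P x (fst yu) * QU (fst yu) (snd yu)) = PX x" for x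
      unfolding PX_def
      by (simp add: sum.cartesian_product' sum_distrib_left[symmetric] QU_sum)
    moreover have "0 \<le> c x" for x
      unfolding c_def PX_def using q_nonneg P_nonneg by (simp add: sum_nonneg)
    ultimately show ?thesis
      using P_nonneg QU_nonneg by (subst kl_div_common_conditional) auto
  qed
  also have "(\<lambda>x. c x * PX x) = q"
    using ac q_nonneg unfolding c_def PX_def by (force simp: less_le)
  finally show ?thesis unfolding PX_def .
qed

lemma single_letter_le_scheme_objective:
  fixes P :: "'x::finite \<Rightarrow> 'y::finite \<Rightarrow> real" and d :: "'x \<Rightarrow> 'xh::finite \<Rightarrow> real"
  assumes P_nonneg: "\<forall>x y. 0 \<le> P x y" and rho_pos: "0 < \<rho>"
    and q: "pmf_on UNIV q" and QY: "pmf_on UNIV QY" and QU: "channel_on UNIV {..<k} QU"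
    and X_indep_U: "\<forall>x. \<forall>u<k. (\<Sum>y\<in>UNIV. QY y * QU y u * V y x) = q x * (\<Sum>y\<in>UNIV. QY y * QU y u)"
    and backward: "(\<forall>x. 0 < q x \<longrightarrow> 0 < (\<Sum>y\<in>UNIV. P x y)) \<Longrightarrow>
      \<forall>x y. QY y * V y x = q x / (\<Sum>y\<in>UNIV. P x y) * P x y"
  shows "ereal \<rho> * rate_dist d D q - kl_div UNIV q (\<lambda>x. \<Sum>y\<in>UNIV. P x y)
    \<le> scheme_objective P d D \<rho> QY k QU (\<lambda>(y, u). V y)"
proof -
  define w where "w u = (\<Sum>y\<in>UNIV. QY y * QU y u)" for u
  have "sum w {..<k} = (\<Sum>y\<in>UNIV. QY y * (\<Sum>u\<in>{..<k}. QU y u))"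
    unfolding w_def by (subst sum.swap) (simp add: sum_distrib_left)
  then have "pmf_on {..<k} w"
    using QY QU unfolding pmf_on_def channel_on_def w_def
    by (auto intro!: sum_nonneg mult_nonneg_nonneg)
  then have "rate_dist d D q \<le> cond_rate_dist d D {..<k} (\<lambda>x u. q x * w u)"
    using rate_dist_le_cond_rate_dist_product[OF q _ finite_lessThan] by blast
  also have "\<dots> = cond_rate_dist d D {..<k} (\<lambda>x u. \<Sum>y\<in>UNIV. QY y * QU y u * V y x)"
    using X_indep_U unfolding w_def by (intro cond_rate_dist_cong) simp
  finally have rate: "ereal \<rho> * rate_dist d D q
      \<le> ereal \<rho> * cond_rate_dist d D {..<k} (\<lambda>x u. \<Sum>y\<in>UNIV. QY y * QU y u * V y x)"
    using rho_pos by (intro ereal_mult_left_mono) auto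
  show ?thesis
  proof (cases "\<forall>x. 0 < q x \<longrightarrow> 0 < (\<Sum>y\<in>UNIV. P x y)")
    case True
    then have "kl_div (UNIV \<times> UNIV \<times> {..<k}) (\<lambda>(x, y, u). QY y * QU y u * V y x)
        (\<lambda>(x, y, u). P x y * QU y u) = kl_div UNIV q (\<lambda>x. \<Sum>y\<in>UNIV. P x y)"
      using kl_div_backward_channel_eq[OF P_nonneg _ True backward[OF True] QU] q
      by (simp add: pmf_on_def)
    then show ?thesis
      using rate by (simp add: scheme_objective_def ereal_minus_mono)
  next
    case False
    then have "kl_div UNIV q (\<lambda>x. \<Sum>y\<in>UNIV. P x y) = \<infinity>"
      using P_nonneg by (auto simp: kl_div_def less_le sum_nonneg)
    then show ?thesis
      using rate by (cases "ereal \<rho> * rate_dist d D q") (auto simp: scheme_objective_def)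
  qed
qed

lemma exists_backward_channel:
  fixes P :: "'x::finite \<Rightarrow> 'y::finite \<Rightarrow> real"
  assumes P_nonneg: "\<forall>x y. 0 \<le> P x y" and q: "pmf_on UNIV q"
    and ac: "\<forall>x. 0 < q x \<longrightarrow> 0 < (\<Sum>y\<in>UNIV. P x y)"
  obtains QY V where "pmf_on UNIV QY" "\<forall>y. pmf_on UNIV (V y)"
    "\<forall>x y. QY y * V y x = q x / (\<Sum>y'\<in>UNIV. P x y') * P x y"
proof -
  define J where "J x y = q x / (\<Sum>y'\<in>UNIV. P x y') * P x y" for x y
  define QY where "QY y = (\<Sum>x\<in>UNIV. J x y)" for y
  define V where "V y x = (if 0 < QY y then J x y / QY y else q x)" for y x
  have J_nonneg: "0 \<le> J x y" for x y
    using q P_nonneg unfolding J_def pmf_on_def by (simp add: sum_nonneg)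
  have "(\<Sum>y\<in>UNIV. J x y) = q x" for x
    using ac q unfolding J_def pmf_on_def
    by (cases "q x = 0") (auto simp: sum_divide_distrib[symmetric] sum_distrib_left[symmetric] less_le)
  then have "(\<Sum>y\<in>UNIV. QY y) = 1"
    using q unfolding QY_def pmf_on_def by (subst sum.swap) simp
  then have QY: "pmf_on UNIV QY"
    unfolding pmf_on_def QY_def using J_nonneg by (simp add: sum_nonneg)
  have "pmf_on UNIV (V y)" for y
  proof (cases "0 < QY y")
    case True
    then show ?thesis
      using J_nonneg unfolding pmf_on_def V_def QY_def by (simp add: sum_divide_distrib[symmetric])
  next
    case False then show ?thesis using q unfolding V_def by simp
  qed
  moreover have "QY y * V y x = J x y" for x y
  proof (cases "0 < QY y")
    case True then show ?thesis by (simp add: V_def)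
  next
    case False
    then have "QY y = 0" using QY by (simp add: pmf_on_def less_le)
    then show ?thesis using J_nonneg sum_nonneg_eq_0_iff[of UNIV "\<lambda>x. J x y"] unfolding QY_def by auto
  qed
  ultimately show ?thesis using that QY unfolding J_def by blast
qed

lemma zero_rate_channel_factorizes:
  fixes QY :: "'y::finite \<Rightarrow> real" and k :: nat
  assumes QY: "pmf_on UNIV QY" and QU: "channel_on UNIV {..<k} QU"
    and zero_rate: "mutual_info UNIV {..<k} (\<lambda>y u. QY y * QU y u) \<le> 0"
  shows "\<forall>u<k. (\<Sum>y\<in>UNIV. QY y * QU y u * V y x) = (\<Sum>y\<in>UNIV. QY y * V y x) * (\<Sum>y\<in>UNIV. QY y * QU y u)"
proof (intro allI impI)
  fix u assume u: "u < k"
  have QU_sum: "(\<Sum>u'\<in>{..<k}. QU y u') = 1" for y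
    using QU by (simp add: channel_on_def pmf_on_def)
  have joint_sum: "(\<Sum>y\<in>UNIV. \<Sum>u'\<in>{..<k}. QY y * QU y u') = 1"
    using QY by (simp add: sum_distrib_left[symmetric] QU_sum pmf_on_def)
  have indep: "\<forall>y\<in>UNIV. \<forall>u'\<in>{..<k}.
      QY y * QU y u' = (\<Sum>u''\<in>{..<k}. QY y * QU y u'') * (\<Sum>y'\<in>UNIV. QY y' * QU y' u')"
    by (rule mutual_info_nonpos_imp_indep[OF _ _ _ joint_sum zero_rate])
       (use QY QU in \<open>auto simp: pmf_on_def channel_on_def\<close>)
  have "QY y * QU y u = QY y * (\<Sum>y'\<in>UNIV. QY y' * QU y' u)" for y
    using indep[rule_format, of y u] u by (simp add: sum_distrib_left[symmetric] QU_sum)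
  then have "(\<Sum>y\<in>UNIV. QY y * QU y u * V y x) = (\<Sum>y\<in>UNIV. QY y * (\<Sum>y'\<in>UNIV. QY y' * QU y' u) * V y x)"
    by (intro sum.cong) auto
  also have "\<dots> = (\<Sum>y\<in>UNIV. QY y * V y x) * (\<Sum>y\<in>UNIV. QY y * QU y u)"
    by (subst sum_distrib_right) (simp add: mult_ac)
  finally show "(\<Sum>y\<in>UNIV. QY y * QU y u * V y x) = (\<Sum>y\<in>UNIV. QY y * V y x) * (\<Sum>y\<in>UNIV. QY y * QU y u)" .
qed

lemma exists_input_with_aux_independent_of_X:
  fixes P :: "'x::finite \<Rightarrow> 'y::finite \<Rightarrow> real"
  assumes P_nonneg: "\<forall>x y. 0 \<le> P x y" and P_sum: "(\<Sum>x\<in>UNIV. \<Sum>y\<in>UNIV. P x y) = 1"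
    and hyp: "R = 0 \<or> (\<forall>x y. P x y = (\<Sum>y'\<in>UNIV. P x y') * (\<Sum>x'\<in>UNIV. P x' y))"
    and q: "pmf_on UNIV q"
  obtains QY V where "pmf_on UNIV QY" "\<forall>y. pmf_on UNIV (V y)"
    "\<And>k QU. (k, QU) \<in> rate_limited_channels QY R \<Longrightarrow>
      \<forall>x. \<forall>u<k. (\<Sum>y\<in>UNIV. QY y * QU y u * V y x) = q x * (\<Sum>y\<in>UNIV. QY y * QU y u)"
    "(\<forall>x. 0 < q x \<longrightarrow> 0 < (\<Sum>y\<in>UNIV. P x y)) \<Longrightarrow>
      \<forall>x y. QY y * V y x = q x / (\<Sum>y'\<in>UNIV. P x y') * P x y"
proof -
  define PX where "PX x = (\<Sum>y\<in>UNIV. P x y)" for x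
  note that = that[folded PX_def]
  show ?thesis
  proof (cases "R = 0 \<and> (\<forall>x. 0 < q x \<longrightarrow> 0 < PX x)")
    case True
    then obtain QY V where QY: "pmf_on UNIV QY" and V: "\<forall>y. pmf_on UNIV (V y)"
      and Bayes: "\<forall>x y. QY y * V y x = q x / PX x * P x y"
      using exists_backward_channel[OF P_nonneg q] unfolding PX_def by metis
    have marginal: "(\<Sum>y\<in>UNIV. QY y * V y x) = q x" for x
      using Bayes True q unfolding PX_def pmf_on_def
      by (cases "q x = 0") (auto simp: sum_divide_distrib[symmetric] sum_distrib_left[symmetric] less_le)
    show ?thesis
    proof (rule that[OF QY V])
      fix k QU assume "(k, QU) \<in> rate_limited_channels QY R"
      then have "channel_on UNIV {..<k} QU" "mutual_info UNIV {..<k} (\<lambda>y u. QY y * QU y u) \<le> 0"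
        using True by (simp_all add: rate_limited_channels_def zero_ereal_def)
      note factorization = zero_rate_channel_factorizes[OF QY this, of V]
      show "\<forall>x. \<forall>u<k. (\<Sum>y\<in>UNIV. QY y * QU y u * V y x) = q x * (\<Sum>y\<in>UNIV. QY y * QU y u)"
        using factorization by (simp add: marginal)
    qed (use Bayes in blast)
  next
    case False
    define PY where "PY y = (\<Sum>x\<in>UNIV. P x y)" for y
    have "pmf_on UNIV PY"
      using P_sum P_nonneg unfolding pmf_on_def PY_def by (subst sum.swap) (simp add: sum_nonneg)
    moreover have "\<forall>x y. PY y * q x = q x / PX x * P x y" if ac: "\<forall>x. 0 < q x \<longrightarrow> 0 < PX x"
    proof -
      have "\<forall>x y. P x y = PX x * PY y" using False ac hyp unfolding PX_def PY_def by blast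
      then show ?thesis using ac q by (auto simp: pmf_on_def less_le)
    qed
    ultimately show ?thesis
      using that[of PY "\<lambda>_. q"] q by (simp add: sum_distrib_left mult_ac)
  qed
qed

lemma single_letter_le_rate_limited_value:
  fixes P :: "'x::finite \<Rightarrow> 'y::finite \<Rightarrow> real" and d :: "'x \<Rightarrow> 'xh::finite \<Rightarrow> real"
  assumes P_nonneg: "\<forall>x y. 0 \<le> P x y" and P_sum: "(\<Sum>x\<in>UNIV. \<Sum>y\<in>UNIV. P x y) = 1"
    and rho_pos: "0 < \<rho>"
    and hyp: "R = 0 \<or> (\<forall>x y. P x y = (\<Sum>y'\<in>UNIV. P x y') * (\<Sum>x'\<in>UNIV. P x' y))"
    and q: "pmf_on UNIV q"
  shows "ereal \<rho> * rate_dist d D q - kl_div UNIV q (\<lambda>x. \<Sum>y\<in>UNIV. P x y)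
    \<le> (SUP QY \<in> {QY. pmf_on UNIV QY}. INF (k, QU) \<in> rate_limited_channels QY R.
          SUP QX \<in> {QX. channel_on (UNIV \<times> {..<k}) UNIV QX}. scheme_objective P d D \<rho> QY k QU QX)"
proof -
  obtain QY V where QY: "pmf_on UNIV QY" and V: "\<forall>y. pmf_on UNIV (V y)"
    and X_indep_U: "\<And>k QU. (k, QU) \<in> rate_limited_channels QY R \<Longrightarrow>
      \<forall>x. \<forall>u<k. (\<Sum>y\<in>UNIV. QY y * QU y u * V y x) = q x * (\<Sum>y\<in>UNIV. QY y * QU y u)"
    and backward: "(\<forall>x. 0 < q x \<longrightarrow> 0 < (\<Sum>y\<in>UNIV. P x y)) \<Longrightarrow>
      \<forall>x y. QY y * V y x = q x / (\<Sum>y'\<in>UNIV. P x y') * P x y"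
    using exists_input_with_aux_independent_of_X[OF P_nonneg P_sum hyp q] by blast
  from QY have "QY \<in> {QY. pmf_on UNIV QY}" by simp
  then show ?thesis
  proof (rule SUP_upper2, intro INF_greatest, clarify)
    fix k QU assume "(k, QU) \<in> rate_limited_channels QY R"
    then show "ereal \<rho> * rate_dist d D q - kl_div UNIV q (\<lambda>x. \<Sum>y\<in>UNIV. P x y)
        \<le> (SUP QX \<in> {QX. channel_on (UNIV \<times> {..<k}) UNIV QX}. scheme_objective P d D \<rho> QY k QU QX)"
      using V X_indep_U backward
      by (intro SUP_upper2[where i = "\<lambda>(y, u). V y"] single_letter_le_scheme_objective[OF P_nonneg rho_pos q QY])
         (auto simp: channel_on_def rate_limited_channels_def)
  qed
qed

theorem mainTheorem4:
  fixes P :: "'x::finite \<Rightarrow> 'y::finite \<Rightarrow> real"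
    and d :: "'x \<Rightarrow> 'xh::finite \<Rightarrow> real"
    and D R \<rho> :: real
  assumes P_nonneg: "\<forall>x y. 0 \<le> P x y"
    and P_sum: "(\<Sum>x\<in>UNIV. \<Sum>y\<in>UNIV. P x y) = 1"
    and d_nonneg: "\<forall>x xh. 0 \<le> d x xh"
    and D_pos: "0 < D"
    and R_nonneg: "0 \<le> R"
    and rho_pos: "0 < \<rho>"
    and hyp: "R = 0 \<or> (\<forall>x y. P x y = (\<Sum>y'\<in>UNIV. P x y') * (\<Sum>x'\<in>UNIV. P x' y))"
  shows
    "(SUP QY \<in> {QY. pmf_on UNIV QY}.
        INF kQ \<in> {(k::nat, QU). channel_on UNIV {..<k} QU \<and>
                    mutual_info UNIV {..<k} (\<lambda>y u. QY y * QU y u) \<le> ereal R}.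
          (case kQ of (k, QU) \<Rightarrow>
            SUP QX \<in> {QX. channel_on (UNIV \<times> {..<k}) UNIV QX}.
              ereal \<rho> * cond_rate_dist d D {..<k}
                  (\<lambda>x u. \<Sum>y\<in>UNIV. QY y * QU y u * QX (y, u) x)
              - kl_div (UNIV \<times> UNIV \<times> {..<k})
                  (\<lambda>(x, y, u). QY y * QU y u * QX (y, u) x)
                  (\<lambda>(x, y, u). P x y * QU y u)))
     = (SUP QX \<in> {QX. pmf_on UNIV QX}.
          ereal \<rho> * rate_dist d D QX - kl_div UNIV QX (\<lambda>x. \<Sum>y\<in>UNIV. P x y))"
    (is "?lhs = ?rhs")
proof (rule antisym)
  show "?lhs \<le> ?rhs"
    using rate_limited_value_le_single_letter[OF P_nonneg rho_pos R_nonneg]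
    unfolding rate_limited_channels_def scheme_objective_def by (intro SUP_least) auto
  show "?rhs \<le> ?lhs"
    using single_letter_le_rate_limited_value[OF P_nonneg P_sum rho_pos hyp]
    unfolding rate_limited_channels_def scheme_objective_def by (intro SUP_least) auto
qed

end
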